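(* Let $h$ be a hospital and let $\mathrm{Ch}_h$ be the choice function that, given $X'\subseteq X_h$ (with $\mathrm{Ch}_h(\emptyset)=\emptyset$), sorts $X'$ in non-decreasing order of wage (ties broken by a fixed order) as $x^{(1)},\dots,x^{(|X'|)}$, starts with $Y=\emptyset$, for $i=1,\dots,|X'|-1$ adds $x^{(i)}$ to $Y$ if $w_h(Y\cup\{x^{(i)}\})<B_h$, then adds $x^{(|X'|)}$ to $Y$ and returns $Y$. Then for every $X'\subseteq X_h$, $w_h(\mathrm{Ch}_h(X'))<B_h+\overline{w}_h$.
   Context: Hospital $h$ has a finite set $X_h$ of contracts $x$ with wages $x_W$, $0<x_W\le B_h$, where $B_h>0$ is its budget. $w_h(Y)=\sum_{x\in Y}x_W$, $\overline{w}_h=\max_{x\in X_h}x_W$. *)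

theory Defs
  imports Complex_Main "HOL-Library.Product_Lexorder"
begin

definition wsum :: "('c \<Rightarrow> real) \<Rightarrow> 'c set \<Rightarrow> real" where
  "wsum wage Y = (\<Sum>x\<in>Y. wage x)"

fun greedy :: "('c \<Rightarrow> real) \<Rightarrow> real \<Rightarrow> 'c set \<Rightarrow> 'c list \<Rightarrow> 'c set" where
  "greedy wage B Y [] = Y"
| "greedy wage B Y [x] = insert x Y"
| "greedy wage B Y (x # y # xs) =
     (if wsum wage (insert x Y) < B then greedy wage B (insert x Y) (y # xs)
      else greedy wage B Y (y # xs))"

definition Ch :: "('c \<Rightarrow> real) \<Rightarrow> real \<Rightarrow> ('c \<Rightarrow> nat) \<Rightarrow> 'c set \<Rightarrow> 'c set" where
  "Ch wage B rank X' = greedy wage B {} (sorted_key_list_of_set (\<lambda>x. (wage x, rank x)) X')"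

end

theory Submission
  imports Defs
begin

text \<open>The greedy pass keeps the running wage strictly below the budget until its last step,
  which adds a single contract, of wage at most the maximal wage in \<open>X\<^sub>h\<close>.\<close>

lemma wsum_insert_le:
  assumes "finite Y" "0 \<le> wage x"
  shows "wsum wage (insert x Y) \<le> wsum wage Y + wage x"
  using assms unfolding wsum_def by (cases "x \<in> Y") (auto simp: insert_absorb)

lemma greedy_wsum_less:
  assumes "finite Y" "wsum wage Y < B" "\<forall>x\<in>set xs. 0 \<le> wage x \<and> wage x \<le> M" "0 \<le> M"
  shows "wsum wage (greedy wage B Y xs) < B + M"
  using assms
proof (induction wage B Y xs rule: greedy.induct)
  case (1 wage B Y)
  then show ?case by simp
next
  case (2 wage B Y x)
  then have "wsum wage (insert x Y) \<le> wsum wage Y + wage x"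
    by (simp add: wsum_insert_le)
  with 2 show ?case by simp
next
  case (3 wage B Y x y xs)
  then show ?case by auto
qed

lemma set_sorted_key_list_of_set_inj_on:
  fixes key :: "'b \<Rightarrow> 'a::linorder"
  assumes "inj_on key S" "A \<subseteq> S" "finite A"
  shows "set (sorted_key_list_of_set key A) = A"
proof -
  interpret folding_insort_key "(\<le>)" "(<)" S key
    by unfold_locales (rule assms(1))
  have "set (linorder.sorted_key_list_of_set (\<le>) key A) = A"
    using assms(2,3) by (rule set_sorted_key_list_of_set)
  \<comment> \<open>The locale's constant is stated for the \<open>linorder\<close> instance; unfold both sides to match the class constant.\<close>
  then show ?thesis
    by (simp add: linorder.sorted_key_list_of_set_def[OF linorder_axioms]
        linorder.insort_key_def[OF linorder_axioms] sorted_key_list_of_set_def insort_key_def)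
qed

theorem lemma6:
  fixes Xh :: "'c set" and wage :: "'c \<Rightarrow> real" and B :: real
    and rank :: "'c \<Rightarrow> nat" and X' :: "'c set"
  assumes "finite Xh" and "Xh \<noteq> {}"
    and "B > 0"
    and "\<forall>x\<in>Xh. 0 < wage x \<and> wage x \<le> B"
    and "inj_on rank Xh"
    and "X' \<subseteq> Xh"
  shows "wsum wage (Ch wage B rank X') < B + Max (wage ` Xh)"
proof -
  let ?key = "\<lambda>x. (wage x, rank x)"
  have "inj_on ?key Xh"
    using assms(5) by (auto simp: inj_on_def)
  then have sorted_set: "set (sorted_key_list_of_set ?key X') = X'"
    using assms(1,6) by (simp add: set_sorted_key_list_of_set_inj_on finite_subset)
  have wage_le_Max: "wage x \<le> Max (wage ` Xh)" if "x \<in> Xh" for x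
    using assms(1) that by simp
  obtain x0 where "x0 \<in> Xh" using assms(2) by blast
  then have "0 \<le> Max (wage ` Xh)"
    using assms(4) wage_le_Max by (meson less_le_trans less_imp_le)
  moreover have "\<forall>x\<in>set (sorted_key_list_of_set ?key X'). 0 \<le> wage x \<and> wage x \<le> Max (wage ` Xh)"
    using sorted_set assms(4,6) wage_le_Max by (auto simp: less_imp_le)
  ultimately show ?thesis
    unfolding Ch_def using assms(3) by (intro greedy_wsum_less) (auto simp: wsum_def)
qed

end
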